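(* Let $g_1, g_2 \in \mathbb{R}^d$, let $G = (g_1, g_2) \in \mathbb{R}^{d \times 2}$ be the matrix with columns $g_1, g_2$, and let $\alpha = (\alpha_1, \alpha_2)^T$ with $\alpha_1, \alpha_2 > 0$. If $G^T G \alpha = \frac{1}{\alpha}$, then $\frac{\alpha_1}{\alpha_2} = \frac{\|g_2\|}{\|g_1\|}$.
   Context: $\frac{1}{\alpha}$ denotes the componentwise reciprocal $(1/\alpha_1, 1/\alpha_2)^T$, and $\|\cdot\|$ is the Euclidean norm. *)

theory Defs
  imports "HOL-Analysis.Analysis"
begin

end

theory Submission
  imports Defs
begin

text \<open>Multiplying the two equations by \<open>a\<close> and \<open>b\<close> respectively and subtracting them
  cancels the mixed term, leaving \<open>(norm u * a)\<^sup>2 = (norm v * b)\<^sup>2\<close>.\<close>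

lemma balanced_scaling_norm_ratio:
  fixes u v :: "'a::real_inner" and a b :: real
  assumes a: "a > 0" and b: "b > 0"
    and eq_u: "(u \<bullet> u) * a + (u \<bullet> v) * b = 1 / a"
    and eq_v: "(u \<bullet> v) * a + (v \<bullet> v) * b = 1 / b"
  shows "a / b = norm v / norm u"
proof -
  have scaled_u: "(u \<bullet> u) * a\<^sup>2 + (u \<bullet> v) * (a * b) = 1"
    using eq_u a by (simp add: field_simps power2_eq_square)
  have scaled_v: "(u \<bullet> v) * (a * b) + (v \<bullet> v) * b\<^sup>2 = 1"
    using eq_v b by (simp add: field_simps power2_eq_square)
  have "u \<noteq> 0"
    using scaled_u by auto
  have "(norm u * a)\<^sup>2 = (norm v * b)\<^sup>2"
    using scaled_u scaled_v by (simp add: power2_norm_eq_inner power_mult_distrib)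
  then have "norm u * a = norm v * b"
    using a b by (simp add: power2_eq_iff_nonneg)
  then show ?thesis
    using b \<open>u \<noteq> 0\<close> by (simp add: field_simps)
qed

lemma gram_mult_vec_2:
  fixes A :: "real ^ 2 ^ 'm"
  shows "((transpose A ** A) *v x) $ j
    = (column j A \<bullet> column 1 A) * x $ 1 + (column j A \<bullet> column 2 A) * x $ 2"
  by (simp add: matrix_mult_transpose_dot_column matrix_vector_mult_def sum_2)

theorem corollary1:
  fixes g1 g2 :: "real ^ 'd" and \<alpha> :: "real ^ 2"
  defines "G \<equiv> (\<chi> i j. if j = 1 then g1 $ i else g2 $ i) :: real ^ 2 ^ 'd"
  assumes "\<alpha> $ 1 > 0" and "\<alpha> $ 2 > 0"
    and "(transpose G ** G) *v \<alpha> = (\<chi> j. 1 / (\<alpha> $ j))"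
  shows "\<alpha> $ 1 / \<alpha> $ 2 = norm g2 / norm g1"
proof -
  have columns: "column 1 G = g1" "column 2 G = g2"
    by (simp_all add: G_def column_def)
  have gram: "((transpose G ** G) *v \<alpha>) $ j = 1 / \<alpha> $ j" for j
    using assms(4) by simp
  show ?thesis
  proof (rule balanced_scaling_norm_ratio)
    show "(g1 \<bullet> g1) * \<alpha> $ 1 + (g1 \<bullet> g2) * \<alpha> $ 2 = 1 / \<alpha> $ 1"
      using gram[of 1] by (simp add: gram_mult_vec_2 columns)
    show "(g1 \<bullet> g2) * \<alpha> $ 1 + (g2 \<bullet> g2) * \<alpha> $ 2 = 1 / \<alpha> $ 2"
      using gram[of 2] by (simp add: gram_mult_vec_2 columns inner_commute)
  qed (use assms in auto)
qed

end
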